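(* Let $G=(X,E,w)$ be a connected weighted graph with total weight $W$, $M\subseteq X$ nonempty, $\sigma$ a probability distribution with $S=\mathrm{supp}(\sigma)\subseteq X\setminus M$, and $C>0$. Let $G'$ be the weighted graph on $X'=\{0,1\}\times X$ with weights $w'_{(0,u),(0,v)}=w_{u,v}$ for all $u,v\in X$, $w'_{(0,u),(1,u)}=w'_{(1,u),(0,u)}=\sigma_uW/C$ for all $u\in X$, and all other weights $0$; let $W'$, $\pi'$, $R'$, $C'$ denote the corresponding quantities on $G'$, $S'=\{1\}\times S$, $M'=\{0\}\times M$. Then $\pi'(S')=\frac{1}{C+2}$. Moreover, if $\rho$ is a probability distribution on $S$ with $\sum_{u\in S}\rho_u^2/\sigma_u=1/p$, and $\rho'$ is the distribution on $X'$ with $\rho'_{(1,u)}=\rho_u$ (zero elsewhere), then \[ C'_{\rho',M'}=\Big(\frac{C_{\rho,M}}{C}+\frac1p\Big)(C+2), \qquad\text{and hence}\qquad \frac{1}{C'_{S',M'}\,\pi'(S')}\ge\frac12\min\Big\{p,\frac{C}{C_{\rho,M}}\Big\}. \]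
   Context: For a weighted graph: $w_u=\sum_vw_{u,v}$, $W=\sum_{u,v}w_{u,v}$ (sum over ordered pairs), $\pi_u=w_u/W$, $\pi(A)=\sum_{u\in A}\pi_u$. A unit flow from a distribution $\sigma$ supported outside $M$ to $M$ is $p:X\times X\to\mathbb R$ with $p_{u,v}=0$ if $w_{u,v}=0$, $p_{u,v}=-p_{v,u}$, $\sum_vp_{u,v}=\sigma_u$ for $u\notin M$, $\sum_{u\in M}\sum_{v\notin M}p_{u,v}=-1$. $R_{\sigma,M}=\min_p\sum_{\{u,v\}}p_{u,v}^2/w_{u,v}$ (unordered pairs), $C_{\sigma,M}=WR_{\sigma,M}$, $R_{S,M}=\min_{\sigma:\mathrm{supp}\sigma\subseteq S}R_{\sigma,M}$, $C_{S,M}=WR_{S,M}$. *)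

theory Defs
  imports Main "HOL-Library.Transitive_Closure_Table" Complex_Main
begin

definition weighted_graph :: "'a set \<Rightarrow> ('a \<Rightarrow> 'a \<Rightarrow> real) \<Rightarrow> bool" where
  "weighted_graph X w \<longleftrightarrow> finite X \<and>
     (\<forall>u\<in>X. \<forall>v\<in>X. 0 \<le> w u v \<and> w u v = w v u)"

definition wg_connected :: "'a set \<Rightarrow> ('a \<Rightarrow> 'a \<Rightarrow> real) \<Rightarrow> bool" where
  "wg_connected X w \<longleftrightarrow>
     (\<forall>u\<in>X. \<forall>v\<in>X. (\<lambda>a b. a \<in> X \<and> b \<in> X \<and> w a b > 0)\<^sup>*\<^sup>* u v)"

definition vdeg :: "'a set \<Rightarrow> ('a \<Rightarrow> 'a \<Rightarrow> real) \<Rightarrow> 'a \<Rightarrow> real" where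
  "vdeg X w u = (\<Sum>v\<in>X. w u v)"

definition total_weight :: "'a set \<Rightarrow> ('a \<Rightarrow> 'a \<Rightarrow> real) \<Rightarrow> real" where
  "total_weight X w = (\<Sum>u\<in>X. \<Sum>v\<in>X. w u v)"

definition stat_dist :: "'a set \<Rightarrow> ('a \<Rightarrow> 'a \<Rightarrow> real) \<Rightarrow> 'a \<Rightarrow> real" where
  "stat_dist X w u = vdeg X w u / total_weight X w"

definition stat_meas :: "'a set \<Rightarrow> ('a \<Rightarrow> 'a \<Rightarrow> real) \<Rightarrow> 'a set \<Rightarrow> real" where
  "stat_meas X w A = (\<Sum>u\<in>A. stat_dist X w u)"

definition prob_dist :: "'a set \<Rightarrow> ('a \<Rightarrow> real) \<Rightarrow> bool" where
  "prob_dist X \<sigma> \<longleftrightarrow> (\<forall>u\<in>X. 0 \<le> \<sigma> u) \<and> (\<forall>u. u \<notin> X \<longrightarrow> \<sigma> u = 0) \<and> sum \<sigma> X = 1"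

definition supp :: "'a set \<Rightarrow> ('a \<Rightarrow> real) \<Rightarrow> 'a set" where
  "supp X \<sigma> = {u\<in>X. \<sigma> u \<noteq> 0}"

definition unit_flow :: "'a set \<Rightarrow> ('a \<Rightarrow> 'a \<Rightarrow> real) \<Rightarrow> ('a \<Rightarrow> real) \<Rightarrow> 'a set
     \<Rightarrow> ('a \<Rightarrow> 'a \<Rightarrow> real) \<Rightarrow> bool" where
  "unit_flow X w \<sigma> M p \<longleftrightarrow>
     (\<forall>u\<in>X. \<forall>v\<in>X. w u v = 0 \<longrightarrow> p u v = 0) \<and>
     (\<forall>u\<in>X. \<forall>v\<in>X. p u v = - p v u) \<and>
     (\<forall>u\<in>X - M. (\<Sum>v\<in>X. p u v) = \<sigma> u) \<and>
     (\<Sum>u\<in>M. \<Sum>v\<in>X - M. p u v) = -1"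

text \<open>Energy: sum over unordered pairs {u,v} of p_{uv}^2/w_{uv}. By antisymmetry
  p_{uu} = 0, so this equals half the sum over ordered pairs (terms with w = 0
  vanish since then p = 0, and x/0 = 0 in Isabelle).\<close>
definition flow_energy :: "'a set \<Rightarrow> ('a \<Rightarrow> 'a \<Rightarrow> real) \<Rightarrow> ('a \<Rightarrow> 'a \<Rightarrow> real) \<Rightarrow> real" where
  "flow_energy X w p = (\<Sum>u\<in>X. \<Sum>v\<in>X. (p u v)\<^sup>2 / w u v) / 2"

definition eff_res :: "'a set \<Rightarrow> ('a \<Rightarrow> 'a \<Rightarrow> real) \<Rightarrow> ('a \<Rightarrow> real) \<Rightarrow> 'a set \<Rightarrow> real" where
  "eff_res X w \<sigma> M = Inf {flow_energy X w p | p. unit_flow X w \<sigma> M p}"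

definition commute_time :: "'a set \<Rightarrow> ('a \<Rightarrow> 'a \<Rightarrow> real) \<Rightarrow> ('a \<Rightarrow> real) \<Rightarrow> 'a set \<Rightarrow> real" where
  "commute_time X w \<sigma> M = total_weight X w * eff_res X w \<sigma> M"

definition eff_res_set :: "'a set \<Rightarrow> ('a \<Rightarrow> 'a \<Rightarrow> real) \<Rightarrow> 'a set \<Rightarrow> 'a set \<Rightarrow> real" where
  "eff_res_set X w S M = Inf {eff_res X w \<sigma> M | \<sigma>. prob_dist X \<sigma> \<and> supp X \<sigma> \<subseteq> S}"

definition commute_time_set :: "'a set \<Rightarrow> ('a \<Rightarrow> 'a \<Rightarrow> real) \<Rightarrow> 'a set \<Rightarrow> 'a set \<Rightarrow> real" where
  "commute_time_set X w S M = total_weight X w * eff_res_set X w S M"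

definition lift_vertices :: "'a set \<Rightarrow> (nat \<times> 'a) set" where
  "lift_vertices X = {0::nat, 1} \<times> X"

definition lift_weight :: "'a set \<Rightarrow> ('a \<Rightarrow> 'a \<Rightarrow> real) \<Rightarrow> ('a \<Rightarrow> real) \<Rightarrow> real
     \<Rightarrow> (nat \<times> 'a) \<Rightarrow> (nat \<times> 'a) \<Rightarrow> real" where
  "lift_weight X w \<sigma> C x y =
     (case (x, y) of ((i, u), (j, v)) \<Rightarrow>
        if i = 0 \<and> j = 0 then w u v
        else if u = v \<and> ((i = 0 \<and> j = 1) \<or> (i = 1 \<and> j = 0))
          then \<sigma> u * total_weight X w / C
        else 0)"

definition lift_dist :: "('a \<Rightarrow> real) \<Rightarrow> (nat \<times> 'a) \<Rightarrow> real" where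
  "lift_dist \<rho> x = (if fst x = 1 then \<rho> (snd x) else 0)"

end

theory Submission
  imports Defs
begin

text \<open>
  A unit flow in G' from \<rho>' to M' = {0} \<times> M must carry exactly \<rho>(u) across the edge from (1, u)
  to (0, u), and its restriction to the copy {0} \<times> X is a unit flow from \<rho> to M in G; conversely
  every such flow lifts. So the energies differ by the constant
  \<Sum>u. \<rho>(u)^2 / (\<sigma>(u) W / C) = C / (W p), giving R'(\<rho>', M') = R(\<rho>, M) + C / (W p), while
  W' = W (C + 2) / C. Every distribution on S' is such a lift, and \<Sum>u. \<rho>(u)^2 / \<sigma>(u) \<ge> 1 by
  Cauchy-Schwarz, so C / W \<le> R'(S', M') \<le> R'(\<rho>', M'), that is
  1 \<le> C'(S', M') \<pi>'(S') \<le> C(\<rho>, M) / C + 1 / p; the bound follows by comparing with the larger summand.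
\<close>

lemma sum_eq_single:
  assumes "finite A" "a \<in> A" "\<And>x. x \<in> A \<Longrightarrow> x \<noteq> a \<Longrightarrow> f x = 0"
  shows "(\<Sum>x\<in>A. f x) = f a"
proof -
  have "(\<Sum>x\<in>A. f x) = f a + (\<Sum>x\<in>A - {a}. f x)"
    using assms by (simp add: sum.remove)
  also have "(\<Sum>x\<in>A - {a}. f x) = 0"
    using assms by (intro sum.neutral) auto
  finally show ?thesis by simp
qed

lemma double_sum_antisym_eq_0:
  fixes p :: "'a \<Rightarrow> 'a \<Rightarrow> 'b::linordered_ab_group_add"
  assumes "\<And>u v. u \<in> A \<Longrightarrow> v \<in> A \<Longrightarrow> p u v = - p v u"
  shows "(\<Sum>u\<in>A. \<Sum>v\<in>A. p u v) = 0"
proof -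
  have "(\<Sum>u\<in>A. \<Sum>v\<in>A. p u v) = (\<Sum>v\<in>A. \<Sum>u\<in>A. - p v u)"
    by (subst sum.swap) (intro sum.cong refl assms)
  also have "\<dots> = - (\<Sum>u\<in>A. \<Sum>v\<in>A. p u v)"
    by (simp add: sum_negf)
  finally show ?thesis by simp
qed

lemma sum_divide_supp:
  fixes \<sigma> :: "'a \<Rightarrow> real"
  assumes "finite X"
  shows "(\<Sum>u\<in>supp X \<sigma>. f u / \<sigma> u) = (\<Sum>u\<in>X. f u / \<sigma> u)"
  using assms by (intro sum.mono_neutral_left) (auto simp: supp_def)

lemma mem_lift_vertices [simp]: "(i, u) \<in> lift_vertices X \<longleftrightarrow> (i = 0 \<or> i = 1) \<and> u \<in> X"
  unfolding lift_vertices_def by auto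

lemma lift_vertices_cases:
  assumes "x \<in> lift_vertices X"
  obtains u where "u \<in> X" "x = (0, u)" | u where "u \<in> X" "x = (1, u)"
  using assms unfolding lift_vertices_def by auto

lemma sum_lift_vertices:
  assumes "finite X"
  shows "(\<Sum>x\<in>lift_vertices X. f x) = (\<Sum>u\<in>X. f (0, u)) + (\<Sum>u\<in>X. f (1, u))"
proof -
  have "(\<Sum>x\<in>lift_vertices X. f x) = (\<Sum>i\<in>{0::nat, 1}. \<Sum>u\<in>X. f (i, u))"
    unfolding lift_vertices_def by (simp add: sum.cartesian_product)
  then show ?thesis by simp
qed

lemma sum_singleton_times: "(\<Sum>x\<in>{i} \<times> S. f x) = (\<Sum>u\<in>S. f (i, u))"
proof -
  have "{i} \<times> S = Pair i ` S" by auto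
  then show ?thesis by (simp add: sum.reindex inj_on_def)
qed

lemma sum_lift_vertices_Diff:
  assumes "finite X" "M \<subseteq> X"
  shows "(\<Sum>x\<in>lift_vertices X - {0} \<times> M. f x) = (\<Sum>u\<in>X - M. f (0, u)) + (\<Sum>u\<in>X. f (1, u))"
proof -
  have "lift_vertices X - {0} \<times> M = {0} \<times> (X - M) \<union> {1} \<times> X"
    unfolding lift_vertices_def by auto
  moreover have "(\<Sum>x\<in>{0} \<times> (X - M) \<union> {1} \<times> X. f x) = (\<Sum>x\<in>{0} \<times> (X - M). f x) + (\<Sum>x\<in>{1} \<times> X. f x)"
    using assms by (intro sum.union_disjoint) auto
  ultimately show ?thesis by (simp add: sum_singleton_times)
qed

lemma sum_sq_divide_ge_1:
  assumes r: "prob_dist X r" and \<sigma>: "prob_dist X \<sigma>" and "supp X r \<subseteq> supp X \<sigma>"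
  shows "(\<Sum>u\<in>X. (r u)\<^sup>2 / \<sigma> u) \<ge> 1"
proof -
  have "2 * r u - \<sigma> u \<le> (r u)\<^sup>2 / \<sigma> u" if u: "u \<in> X" for u
  proof (cases "\<sigma> u = 0")
    case True
    then show ?thesis using assms(3) u by (auto simp: supp_def)
  next
    case False
    then have "\<sigma> u > 0" using \<sigma> u by (force simp: prob_dist_def)
    moreover have "(2 * r u - \<sigma> u) * \<sigma> u \<le> (r u)\<^sup>2"
      using zero_le_power2[of "r u - \<sigma> u"] by (simp add: power2_eq_square algebra_simps)
    ultimately show ?thesis by (simp add: pos_le_divide_eq)
  qed
  then have "(\<Sum>u\<in>X. 2 * r u - \<sigma> u) \<le> (\<Sum>u\<in>X. (r u)\<^sup>2 / \<sigma> u)"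
    by (rule sum_mono)
  moreover have "(\<Sum>u\<in>X. 2 * r u - \<sigma> u) = 1"
    using r \<sigma> by (simp add: sum_subtractf sum_distrib_left[symmetric] prob_dist_def)
  ultimately show ?thesis by simp
qed

lemma half_min_le_inverse:
  fixes a p t :: real
  assumes "a \<ge> 0" "p > 0" "1 \<le> t" "t \<le> a + 1 / p"
  shows "1 / 2 * min p (1 / a) \<le> 1 / t"
proof (cases "a \<ge> 1 / p")
  case True
  then have "t \<le> 2 * a" "a > 0" using assms by (auto intro: less_le_trans)
  then have "1 / (2 * a) \<le> 1 / t" using assms by (intro divide_left_mono) auto
  then show ?thesis by (simp add: min_le_iff_disj)
next
  case False
  then have "t \<le> 2 / p" using assms by simp
  then have "1 / (2 / p) \<le> 1 / t" using assms by (intro divide_left_mono) auto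
  then show ?thesis by (simp add: min_le_iff_disj)
qed

section \<open>Unit flows and effective resistance\<close>

lemma unit_flow_zero_off_edges:
  "unit_flow X w s M p \<Longrightarrow> u \<in> X \<Longrightarrow> v \<in> X \<Longrightarrow> w u v = 0 \<Longrightarrow> p u v = 0"
  unfolding unit_flow_def by blast

lemma unit_flow_antisym: "unit_flow X w s M p \<Longrightarrow> u \<in> X \<Longrightarrow> v \<in> X \<Longrightarrow> p u v = - p v u"
  unfolding unit_flow_def by blast

lemma unit_flow_divergence: "unit_flow X w s M p \<Longrightarrow> u \<in> X - M \<Longrightarrow> (\<Sum>v\<in>X. p u v) = s u"
  unfolding unit_flow_def by blast

lemma unit_flow_into_target: "unit_flow X w s M p \<Longrightarrow> (\<Sum>u\<in>M. \<Sum>v\<in>X - M. p u v) = -1"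
  unfolding unit_flow_def by blast

lemma unit_flowI:
  assumes "\<And>u v. u \<in> X \<Longrightarrow> v \<in> X \<Longrightarrow> w u v = 0 \<Longrightarrow> p u v = 0"
    and "\<And>u v. u \<in> X \<Longrightarrow> v \<in> X \<Longrightarrow> p u v = - p v u"
    and "\<And>u. u \<in> X - M \<Longrightarrow> (\<Sum>v\<in>X. p u v) = s u"
    and "(\<Sum>u\<in>M. \<Sum>v\<in>X - M. p u v) = -1"
  shows "unit_flow X w s M p"
  unfolding unit_flow_def using assms by blast

definition edge_flow :: "'a set \<Rightarrow> ('a \<Rightarrow> 'a \<Rightarrow> real) \<Rightarrow> ('a \<Rightarrow> 'a \<Rightarrow> real) \<Rightarrow> bool" where
  "edge_flow X w f \<longleftrightarrow>
     (\<forall>u\<in>X. \<forall>v\<in>X. w u v = 0 \<longrightarrow> f u v = 0) \<and> (\<forall>u\<in>X. \<forall>v\<in>X. f u v = - f v u)"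

lemma edge_flow_add:
  assumes f: "edge_flow X w f" and g: "edge_flow X w g"
  shows "edge_flow X w (\<lambda>x y. f x y + g x y)"
  unfolding edge_flow_def
proof (intro conjI ballI impI)
  fix u v assume "u \<in> X" "v \<in> X"
  then have f_uv: "w u v = 0 \<longrightarrow> f u v = 0" "f u v = - f v u"
    and g_uv: "w u v = 0 \<longrightarrow> g u v = 0" "g u v = - g v u"
    using f g unfolding edge_flow_def by blast+
  show "f u v + g u v = 0" if "w u v = 0" using f_uv(1) g_uv(1) that by simp
  show "f u v + g u v = - (f v u + g v u)" using f_uv(2) g_uv(2) by simp
qed

definition edge_unit_flow :: "'a \<Rightarrow> 'a \<Rightarrow> 'a \<Rightarrow> 'a \<Rightarrow> real" where
  "edge_unit_flow b c x y = (if x = b \<and> y = c then 1 else 0) - (if x = c \<and> y = b then 1 else 0)"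

lemma edge_flow_edge_unit_flow:
  assumes "weighted_graph X w" "b \<in> X" "c \<in> X" "w b c > 0"
  shows "edge_flow X w (edge_unit_flow b c)"
  unfolding edge_flow_def
proof (intro conjI ballI impI)
  fix u v assume "u \<in> X" "v \<in> X"
  show "edge_unit_flow b c u v = 0" if "w u v = 0"
  proof -
    have "w c b > 0" using assms by (simp add: weighted_graph_def)
    then have "\<not> (u = b \<and> v = c)" "\<not> (u = c \<and> v = b)" using assms(4) that by auto
    then show ?thesis unfolding edge_unit_flow_def by (simp only: if_False diff_self)
  qed
  show "edge_unit_flow b c u v = - edge_unit_flow b c v u"
    unfolding edge_unit_flow_def by (cases "u = b"; cases "v = c"; cases "u = c"; cases "v = b") simp_all
qed

lemma sum_edge_unit_flow:
  assumes "finite X" "b \<in> X" "c \<in> X"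
  shows "(\<Sum>y\<in>X. edge_unit_flow b c x y) = (if x = b then 1 else 0) - (if x = c then 1 else 0)"
proof -
  have "(\<Sum>y\<in>X. if x = b \<and> y = c then 1 else (0::real)) = (if x = b then 1 else 0)"
    using assms by (cases "x = b") (simp_all add: sum.delta)
  moreover have "(\<Sum>y\<in>X. if x = c \<and> y = b then 1 else (0::real)) = (if x = c then 1 else 0)"
    using assms by (cases "x = c") (simp_all add: sum.delta)
  ultimately show ?thesis unfolding edge_unit_flow_def sum_subtractf by simp
qed
lemma path_edge_flow:
  assumes wg: "weighted_graph X w"
    and path: "(\<lambda>a b. a \<in> X \<and> b \<in> X \<and> w a b > 0)\<^sup>*\<^sup>* a b"
  obtains f where "edge_flow X w f"
    "\<And>x. x \<in> X \<Longrightarrow> (\<Sum>y\<in>X. f x y) = (if x = a then 1 else 0) - (if x = b then 1 else 0)"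
proof -
  have fin: "finite X" using wg by (simp add: weighted_graph_def)
  from path have "\<exists>f. edge_flow X w f \<and>
    (\<forall>x\<in>X. (\<Sum>y\<in>X. f x y) = (if x = a then 1 else 0) - (if x = b then 1 else 0))"
  proof (induction rule: rtranclp_induct)
    case base
    show ?case by (intro exI[of _ "\<lambda>_ _. 0"]) (simp add: edge_flow_def)
  next
    case (step b c)
    then obtain f where f: "edge_flow X w f"
      "\<forall>x\<in>X. (\<Sum>y\<in>X. f x y) = (if x = a then 1 else 0) - (if x = b then 1 else 0)" by blast
    have bc: "b \<in> X" "c \<in> X" "w b c > 0" using step by auto
    have "(\<Sum>y\<in>X. f x y + edge_unit_flow b c x y)
        = (if x = a then 1 else 0) - (if x = c then 1 else 0)" if "x \<in> X" for x
      using f(2) that sum_edge_unit_flow[OF fin bc(1,2)] by (simp add: sum.distrib)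
    then show ?case
      using edge_flow_add[OF f(1) edge_flow_edge_unit_flow[OF wg bc]] by blast
  qed
  then show ?thesis using that by blast
qed

lemma edge_flow_weighted_sum:
  assumes "\<And>u. u \<in> I \<Longrightarrow> edge_flow X w (F u)"
  shows "edge_flow X w (\<lambda>x y. \<Sum>u\<in>I. c u * F u x y)"
  unfolding edge_flow_def
proof (intro conjI ballI impI)
  fix x y assume "x \<in> X" "y \<in> X"
  then have F: "\<And>u. u \<in> I \<Longrightarrow> (w x y = 0 \<longrightarrow> F u x y = 0) \<and> F u x y = - F u y x"
    using assms unfolding edge_flow_def by blast
  show "(\<Sum>u\<in>I. c u * F u x y) = 0" if "w x y = 0"
    using F that by simp
  show "(\<Sum>u\<in>I. c u * F u x y) = - (\<Sum>u\<in>I. c u * F u y x)"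
    using F by (simp add: sum_negf[symmetric] cong: sum.cong)
qed

lemma unit_flow_of_divergence:
  assumes fin: "finite X" and MX: "M \<subseteq> X" and m: "m \<in> M" and p: "edge_flow X w p"
    and div: "\<And>x. x \<in> X \<Longrightarrow> (\<Sum>y\<in>X. p x y) = r x - (if x = m then 1 else 0)"
    and r0: "\<And>u. u \<in> M \<Longrightarrow> r u = 0"
  shows "unit_flow X w r M p"
proof (rule unit_flowI)
  show "p u v = 0" if "u \<in> X" "v \<in> X" "w u v = 0" for u v
    using p that unfolding edge_flow_def by blast
  show anti: "p u v = - p v u" if "u \<in> X" "v \<in> X" for u v
    using p that unfolding edge_flow_def by blast
  show "(\<Sum>v\<in>X. p u v) = r u" if "u \<in> X - M" for u
    using div[of u] m that by auto
  have "(\<Sum>u\<in>M. \<Sum>v\<in>X - M. p u v) = (\<Sum>u\<in>M. \<Sum>v\<in>X. p u v) - (\<Sum>u\<in>M. \<Sum>v\<in>M. p u v)"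
    using fin MX by (simp add: sum_diff sum_subtractf finite_subset)
  also have "(\<Sum>u\<in>M. \<Sum>v\<in>M. p u v) = 0"
    using MX by (intro double_sum_antisym_eq_0 anti) auto
  also have "(\<Sum>u\<in>M. \<Sum>v\<in>X. p u v) = (\<Sum>u\<in>M. - (if u = m then 1 else 0))"
    using div r0 MX by (intro sum.cong) auto
  also have "\<dots> = -1"
    using m fin MX by (simp add: sum_negf finite_subset)
  finally show "(\<Sum>u\<in>M. \<Sum>v\<in>X - M. p u v) = -1" by simp
qed

text \<open>Superpose, with weights \<open>r u\<close>, unit path flows from every vertex \<open>u\<close> to one fixed \<open>m \<in> M\<close>.\<close>

lemma unit_flow_exists:
  assumes wg: "weighted_graph X w" and conn: "wg_connected X w"
    and MX: "M \<subseteq> X" and m: "m \<in> M"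
    and r: "prob_dist X r" and rs: "supp X r \<subseteq> X - M"
  obtains p where "unit_flow X w r M p"
proof -
  have fin: "finite X" using wg by (simp add: weighted_graph_def)
  have "\<forall>u\<in>X. \<exists>f. edge_flow X w f \<and>
      (\<forall>x\<in>X. (\<Sum>y\<in>X. f x y) = (if x = u then 1 else 0) - (if x = m then 1 else 0))"
  proof
    fix u assume "u \<in> X"
    then have "(\<lambda>a b. a \<in> X \<and> b \<in> X \<and> w a b > 0)\<^sup>*\<^sup>* u m"
      using conn m MX by (auto simp: wg_connected_def)
    then obtain f where "edge_flow X w f"
      "\<And>x. x \<in> X \<Longrightarrow> (\<Sum>y\<in>X. f x y) = (if x = u then 1 else 0) - (if x = m then 1 else 0)"
      by (rule path_edge_flow[OF wg]) blast
    then show "\<exists>f. edge_flow X w f \<and>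
        (\<forall>x\<in>X. (\<Sum>y\<in>X. f x y) = (if x = u then 1 else 0) - (if x = m then 1 else 0))"
      by blast
  qed
  then obtain F where F: "\<forall>u\<in>X. edge_flow X w (F u) \<and>
      (\<forall>x\<in>X. (\<Sum>y\<in>X. F u x y) = (if x = u then 1 else 0) - (if x = m then 1 else 0))"
    by (rule bchoice[THEN exE])
  define p where "p x y = (\<Sum>u\<in>X. r u * F u x y)" for x y
  have "edge_flow X w p"
    unfolding p_def using F by (intro edge_flow_weighted_sum) blast
  moreover have "(\<Sum>y\<in>X. p x y) = r x - (if x = m then 1 else 0)" if x: "x \<in> X" for x
  proof -
    have "(\<Sum>y\<in>X. p x y) = (\<Sum>u\<in>X. r u * (\<Sum>y\<in>X. F u x y))"
      unfolding p_def sum_distrib_left by (rule sum.swap)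
    also have "\<dots> = (\<Sum>u\<in>X. (if u = x then r u else 0) - r u * (if x = m then 1 else 0))"
      using F x by (intro sum.cong) (auto simp: right_diff_distrib)
    also have "\<dots> = r x - (if x = m then 1 else 0)"
      using fin x r by (simp add: sum_subtractf sum_distrib_right[symmetric] prob_dist_def)
    finally show ?thesis .
  qed
  moreover have "r u = 0" if "u \<in> M" for u
    using rs that MX by (auto simp: supp_def)
  ultimately show ?thesis
    using that unit_flow_of_divergence[OF fin MX m] by blast
qed

lemma flow_energy_nonneg: "weighted_graph X w \<Longrightarrow> flow_energy X w p \<ge> 0"
  unfolding flow_energy_def weighted_graph_def by (intro divide_nonneg_nonneg sum_nonneg) auto

lemma eff_res_nonneg:
  assumes "weighted_graph X w" "unit_flow X w r M p"
  shows "eff_res X w r M \<ge> 0"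
  unfolding eff_res_def using assms flow_energy_nonneg by (intro cInf_greatest) auto

section \<open>The lifted graph\<close>

definition lift_flow :: "('a \<Rightarrow> real) \<Rightarrow> ('a \<Rightarrow> 'a \<Rightarrow> real) \<Rightarrow> nat \<times> 'a \<Rightarrow> nat \<times> 'a \<Rightarrow> real" where
  "lift_flow r p x y =
     (if fst x = 0 \<and> fst y = 0 then p (snd x) (snd y)
      else if fst x = 1 \<and> fst y = 0 \<and> snd x = snd y then r (snd x)
      else if fst x = 0 \<and> fst y = 1 \<and> snd x = snd y then - r (snd x) else 0)"

lemma lift_flow_simps [simp]:
  "lift_flow r p (0, u) (0, v) = p u v"
  "lift_flow r p (Suc 0, u) (0, v) = (if u = v then r u else 0)"
  "lift_flow r p (0, u) (Suc 0, v) = (if u = v then - r u else 0)"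
  "lift_flow r p (Suc 0, u) (Suc 0, v) = 0"
  unfolding lift_flow_def by auto

locale lifted_graph =
  fixes X :: "'a set" and w :: "'a \<Rightarrow> 'a \<Rightarrow> real" and M :: "'a set"
    and \<sigma> :: "'a \<Rightarrow> real" and C :: real
  assumes wg: "weighted_graph X w" and conn: "wg_connected X w"
    and M_subset: "M \<subseteq> X" and M_nonempty: "M \<noteq> {}" and sigma: "prob_dist X \<sigma>"
    and supp_sigma: "supp X \<sigma> \<subseteq> X - M" and C_pos: "C > 0"
begin

abbreviation "W \<equiv> total_weight X w"
abbreviation "X' \<equiv> lift_vertices X"
abbreviation "w' \<equiv> lift_weight X w \<sigma> C"

lemma finite_X: "finite X"
  using wg by (simp add: weighted_graph_def)

lemma unit_flow_exists_source:
  assumes "prob_dist X r" "supp X r \<subseteq> supp X \<sigma>"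
  obtains p where "unit_flow X w r M p"
  using unit_flow_exists[OF wg conn M_subset _ assms(1)] M_nonempty assms(2) supp_sigma by blast

lemma eff_res_source_nonneg:
  assumes "prob_dist X r" "supp X r \<subseteq> supp X \<sigma>"
  shows "eff_res X w r M \<ge> 0"
  using unit_flow_exists_source[OF assms] eff_res_nonneg[OF wg] by metis

text \<open>Some source vertex \<open>s\<close> lies outside \<open>M\<close>, and a path from \<open>s\<close> into \<open>M\<close> has a first edge.\<close>

lemma W_pos: "W > 0"
proof -
  obtain s where s: "s \<in> X" "\<sigma> s \<noteq> 0"
    using sigma by (metis prob_dist_def sum.neutral zero_neq_one)
  obtain m where m: "m \<in> M" using M_nonempty by auto
  have "s \<noteq> m" using s m supp_sigma by (auto simp: supp_def)
  moreover have "(\<lambda>a b. a \<in> X \<and> b \<in> X \<and> w a b > 0)\<^sup>*\<^sup>* s m"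
    using conn s m M_subset by (auto simp: wg_connected_def)
  ultimately obtain y where y: "y \<in> X" "w s y > 0"
    by (blast elim: converse_rtranclpE)
  have "w s y \<le> (\<Sum>v\<in>X. w s v)"
    using y s finite_X wg by (intro member_le_sum) (auto simp: weighted_graph_def)
  also have "\<dots> \<le> W" unfolding total_weight_def
    using s finite_X wg by (intro member_le_sum[where f = "\<lambda>u. \<Sum>v\<in>X. w u v"] sum_nonneg)
      (auto simp: weighted_graph_def)
  finally show ?thesis using y by linarith
qed

lemma lift_weight_simps [simp]:
  "w' (0, u) (0, v) = w u v"
  "w' (0, u) (Suc 0, v) = (if u = v then \<sigma> u * W / C else 0)"
  "w' (Suc 0, u) (0, v) = (if u = v then \<sigma> u * W / C else 0)"
  "w' (Suc 0, u) (Suc 0, v) = 0"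
  unfolding lift_weight_def by auto

lemma vdeg_lift [simp]:
  assumes "u \<in> X"
  shows "vdeg X' w' (0, u) = vdeg X w u + \<sigma> u * W / C"
    and "vdeg X' w' (Suc 0, u) = \<sigma> u * W / C"
  using assms finite_X by (simp_all add: vdeg_def sum_lift_vertices)

lemma total_weight_lift: "total_weight X' w' = W * (C + 2) / C"
proof -
  have "total_weight X' w' = (\<Sum>u\<in>X. vdeg X' w' (0, u)) + (\<Sum>u\<in>X. vdeg X' w' (1, u))"
    unfolding total_weight_def vdeg_def by (rule sum_lift_vertices[OF finite_X])
  also have "\<dots> = W + 2 * ((\<Sum>u\<in>X. \<sigma> u) * W / C)"
    by (simp add: sum.distrib sum_distrib_right sum_divide_distrib) (simp add: total_weight_def vdeg_def)
  finally show ?thesis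
    using sigma C_pos by (simp add: prob_dist_def field_simps)
qed

lemma stat_meas_lift_source: "stat_meas X' w' ({1} \<times> supp X \<sigma>) = 1 / (C + 2)"
proof -
  have "stat_meas X' w' ({1} \<times> supp X \<sigma>) = (\<Sum>u\<in>supp X \<sigma>. \<sigma> u) * (W / C) / total_weight X' w'"
    unfolding stat_meas_def sum_singleton_times stat_dist_def sum_distrib_right sum_divide_distrib
    by (intro sum.cong refl) (auto simp: supp_def)
  also have "(\<Sum>u\<in>supp X \<sigma>. \<sigma> u) = sum \<sigma> X"
    using finite_X by (intro sum.mono_neutral_left) (auto simp: supp_def)
  also have "sum \<sigma> X = 1"
    using sigma by (simp add: prob_dist_def)
  finally show ?thesis
    using W_pos C_pos by (simp add: total_weight_lift)
qed

lemma lift_unit_flow: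
  assumes r: "supp X r \<subseteq> supp X \<sigma>" and p: "unit_flow X w r M p"
  shows "unit_flow X' w' (lift_dist r) ({0} \<times> M) (lift_flow r p)"
proof (rule unit_flowI)
  have r0: "r u = 0" if "u \<in> X" "\<sigma> u = 0 \<or> u \<in> M" for u
    using that r supp_sigma by (auto simp: supp_def)
  have "\<sigma> u = 0" if "\<sigma> u * W / C = 0" for u
    using that W_pos C_pos by simp
  then show "lift_flow r p x y = 0" if "x \<in> X'" "y \<in> X'" "w' x y = 0" for x y
    using that by (auto elim!: lift_vertices_cases simp: unit_flow_zero_off_edges[OF p] r0)
  show "lift_flow r p x y = - lift_flow r p y x" if "x \<in> X'" "y \<in> X'" for x y
    using that by (elim lift_vertices_cases) (auto intro: unit_flow_antisym[OF p])
  show "(\<Sum>y\<in>X'. lift_flow r p x y) = lift_dist r x" if x: "x \<in> X' - {0} \<times> M" for x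
  proof -
    obtain u where "u \<in> X" "x = (0, u) \<and> u \<notin> M \<or> x = (1, u)"
      using x unfolding lift_vertices_def by auto
    then show ?thesis
      using finite_X unit_flow_divergence[OF p] by (auto simp: sum_lift_vertices lift_dist_def)
  qed
  have "(\<Sum>x\<in>{0} \<times> M. \<Sum>y\<in>X' - {0} \<times> M. lift_flow r p x y) = (\<Sum>u\<in>M. \<Sum>v\<in>X - M. p u v)"
    using finite_X M_subset r0
    by (auto simp: sum_singleton_times sum_lift_vertices_Diff[OF finite_X M_subset] intro!: sum.cong)
  then show "(\<Sum>x\<in>{0} \<times> M. \<Sum>y\<in>X' - {0} \<times> M. lift_flow r p x y) = -1"
    using unit_flow_into_target[OF p] by simp
qed

lemma lifted_unit_flow_vanishing:
  assumes P: "unit_flow X' w' s ({0} \<times> M) P" and "u \<in> X" "v \<in> X"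
  shows "P (1, u) (1, v) = 0" and "u \<noteq> v \<Longrightarrow> P (1, u) (0, v) = 0" and "u \<noteq> v \<Longrightarrow> P (0, u) (1, v) = 0"
  using unit_flow_zero_off_edges[OF P, of "(_, u)" "(_, v)"] assms(2,3) by simp_all

lemma lifted_unit_flow_cross_edge:
  assumes P: "unit_flow X' w' (lift_dist r) ({0} \<times> M) P" and u: "u \<in> X"
  shows "P (1, u) (0, u) = r u" and "P (0, u) (1, u) = - r u"
proof -
  have "(\<Sum>y\<in>X'. P (1, u) y) = (\<Sum>v\<in>X. P (1, u) (0, v))"
    using lifted_unit_flow_vanishing(1)[OF P u] by (simp add: sum_lift_vertices[OF finite_X])
  also have "\<dots> = P (1, u) (0, u)"
    using lifted_unit_flow_vanishing(2)[OF P u] u by (intro sum_eq_single[OF finite_X]) auto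
  finally show "P (1, u) (0, u) = r u"
    using unit_flow_divergence[OF P, of "(1, u)"] u by (simp add: lift_dist_def)
  then show "P (0, u) (1, u) = - r u"
    using unit_flow_antisym[OF P, of "(0, u)" "(1, u)"] u by simp
qed

lemma lifted_unit_flow_out_of_copy:
  assumes P: "unit_flow X' w' (lift_dist r) ({0} \<times> M) P" and u: "u \<in> X"
  shows "(\<Sum>v\<in>X. P (0, u) (1, v)) = - r u"
  using lifted_unit_flow_vanishing(3)[OF P u] lifted_unit_flow_cross_edge(2)[OF P u] u
  by (subst sum_eq_single[OF finite_X u]) auto

lemma restrict_lifted_unit_flow:
  assumes r: "supp X r \<subseteq> supp X \<sigma>" and P: "unit_flow X' w' (lift_dist r) ({0} \<times> M) P"
  shows "unit_flow X w r M (\<lambda>u v. P (0, u) (0, v))"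
proof (rule unit_flowI)
  show "P (0, u) (0, v) = 0" if "u \<in> X" "v \<in> X" "w u v = 0" for u v
    using unit_flow_zero_off_edges[OF P, of "(0, u)" "(0, v)"] that by simp
  show "P (0, u) (0, v) = - P (0, v) (0, u)" if "u \<in> X" "v \<in> X" for u v
    using that by (intro unit_flow_antisym[OF P]) auto
  show "(\<Sum>v\<in>X. P (0, u) (0, v)) = r u" if "u \<in> X - M" for u
    using unit_flow_divergence[OF P, of "(0, u)"] lifted_unit_flow_out_of_copy[OF P] that
    by (simp add: sum_lift_vertices[OF finite_X] lift_dist_def)
  have "r u = 0" if "u \<in> M" for u
    using that r supp_sigma M_subset by (auto simp: supp_def)
  then have "(\<Sum>x\<in>{0} \<times> M. \<Sum>y\<in>X' - {0} \<times> M. P x y) = (\<Sum>u\<in>M. \<Sum>v\<in>X - M. P (0, u) (0, v))"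
    using lifted_unit_flow_out_of_copy[OF P] M_subset
    by (auto simp: sum_singleton_times sum_lift_vertices_Diff[OF finite_X M_subset] intro!: sum.cong)
  then show "(\<Sum>u\<in>M. \<Sum>v\<in>X - M. P (0, u) (0, v)) = -1"
    using unit_flow_into_target[OF P] by simp
qed

text \<open>The cross edge at \<open>u\<close> carries flow \<open>r u\<close> and has weight \<open>\<sigma> u W / C\<close>; it is counted once in each
  direction, which cancels the factor \<open>1/2\<close> in the energy.\<close>

lemma flow_energy_lift:
  assumes "\<And>u. u \<in> X \<Longrightarrow> P (1, u) (0, u) = r u" "\<And>u. u \<in> X \<Longrightarrow> P (0, u) (1, u) = - r u"
  shows "flow_energy X' w' P
    = flow_energy X w (\<lambda>u v. P (0, u) (0, v)) + C / W * (\<Sum>u\<in>X. (r u)\<^sup>2 / \<sigma> u)"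
proof -
  let ?cross = "\<lambda>u. (r u)\<^sup>2 / (\<sigma> u * W / C)"
  have row0: "(\<Sum>y\<in>X'. (P (0, u) y)\<^sup>2 / w' (0, u) y)
      = (\<Sum>v\<in>X. (P (0, u) (0, v))\<^sup>2 / w u v) + ?cross u" if u: "u \<in> X" for u
  proof -
    have "(\<Sum>v\<in>X. (P (0, u) (1, v))\<^sup>2 / w' (0, u) (1, v)) = ?cross u"
      using u assms(2) by (subst sum_eq_single[OF finite_X u]) auto
    then show ?thesis by (simp add: sum_lift_vertices[OF finite_X])
  qed
  have row1: "(\<Sum>y\<in>X'. (P (1, u) y)\<^sup>2 / w' (1, u) y) = ?cross u" if u: "u \<in> X" for u
  proof -
    have "(\<Sum>v\<in>X. (P (1, u) (0, v))\<^sup>2 / w' (1, u) (0, v)) = ?cross u"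
      using u assms(1) by (subst sum_eq_single[OF finite_X u]) auto
    then show ?thesis by (simp add: sum_lift_vertices[OF finite_X])
  qed
  have "flow_energy X' w' P
      = ((\<Sum>u\<in>X. (\<Sum>v\<in>X. (P (0, u) (0, v))\<^sup>2 / w u v) + ?cross u) + (\<Sum>u\<in>X. ?cross u)) / 2"
    unfolding flow_energy_def sum_lift_vertices[OF finite_X, of "\<lambda>x. \<Sum>y\<in>X'. (P x y)\<^sup>2 / w' x y"]
    by (simp only: row0 row1 cong: sum.cong)
  moreover have "(\<Sum>u\<in>X. ?cross u) = C / W * (\<Sum>u\<in>X. (r u)\<^sup>2 / \<sigma> u)"
    by (simp add: sum_distrib_left mult.commute)
  ultimately show ?thesis
    unfolding flow_energy_def by (simp add: sum.distrib)
qed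

lemma lifted_flow_energies:
  assumes r: "supp X r \<subseteq> supp X \<sigma>"
  shows "{flow_energy X' w' P | P. unit_flow X' w' (lift_dist r) ({0} \<times> M) P}
       = (\<lambda>e. C / W * (\<Sum>u\<in>X. (r u)\<^sup>2 / \<sigma> u) + e) ` {flow_energy X w p | p. unit_flow X w r M p}"
proof (intro equalityI subsetI)
  fix e assume "e \<in> {flow_energy X' w' P | P. unit_flow X' w' (lift_dist r) ({0} \<times> M) P}"
  then obtain P where P: "unit_flow X' w' (lift_dist r) ({0} \<times> M) P" "e = flow_energy X' w' P"
    by blast
  have "e = C / W * (\<Sum>u\<in>X. (r u)\<^sup>2 / \<sigma> u) + flow_energy X w (\<lambda>u v. P (0, u) (0, v))"
    using P lifted_unit_flow_cross_edge[OF P(1)] by (simp add: flow_energy_lift)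
  then show "e \<in> (\<lambda>e. C / W * (\<Sum>u\<in>X. (r u)\<^sup>2 / \<sigma> u) + e) ` {flow_energy X w p | p. unit_flow X w r M p}"
    using restrict_lifted_unit_flow[OF r P(1)] by blast
next
  fix e assume "e \<in> (\<lambda>e. C / W * (\<Sum>u\<in>X. (r u)\<^sup>2 / \<sigma> u) + e) ` {flow_energy X w p | p. unit_flow X w r M p}"
  then obtain p where p: "unit_flow X w r M p" "e = C / W * (\<Sum>u\<in>X. (r u)\<^sup>2 / \<sigma> u) + flow_energy X w p"
    by blast
  have "flow_energy X' w' (lift_flow r p) = e"
    using p(2) by (subst flow_energy_lift[where r = r]) auto
  then show "e \<in> {flow_energy X' w' P | P. unit_flow X' w' (lift_dist r) ({0} \<times> M) P}"
    using lift_unit_flow[OF r p(1)] by blast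
qed

lemma eff_res_lift:
  assumes r: "prob_dist X r" "supp X r \<subseteq> supp X \<sigma>"
  shows "eff_res X' w' (lift_dist r) ({0} \<times> M) = eff_res X w r M + C / W * (\<Sum>u\<in>X. (r u)\<^sup>2 / \<sigma> u)"
proof -
  define A where "A = {flow_energy X w p | p. unit_flow X w r M p}"
  have "A \<noteq> {}" using unit_flow_exists_source[OF r] unfolding A_def by blast
  moreover have "bdd_below A"
    unfolding A_def bdd_below_def using flow_energy_nonneg[OF wg] by blast
  ultimately have "Inf ((\<lambda>e. C / W * (\<Sum>u\<in>X. (r u)\<^sup>2 / \<sigma> u) + e) ` A) = C / W * (\<Sum>u\<in>X. (r u)\<^sup>2 / \<sigma> u) + Inf A"
    using Inf_add_eq[of id A] by simp
  then show ?thesis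
    unfolding eff_res_def lifted_flow_energies[OF r(2)] A_def by simp
qed

lemma commute_time_lift:
  assumes "prob_dist X r" "supp X r \<subseteq> supp X \<sigma>"
  shows "commute_time X' w' (lift_dist r) ({0} \<times> M)
    = (commute_time X w r M / C + (\<Sum>u\<in>X. (r u)\<^sup>2 / \<sigma> u)) * (C + 2)"
  using W_pos C_pos
  by (simp add: commute_time_def eff_res_lift[OF assms] total_weight_lift field_simps)

lemma lift_dist_prob_dist:
  assumes "prob_dist X r" "supp X r \<subseteq> supp X \<sigma>"
  shows "prob_dist X' (lift_dist r)" and "supp X' (lift_dist r) \<subseteq> {1} \<times> supp X \<sigma>"
proof -
  have "sum (lift_dist r) X' = sum r X"
    by (simp add: sum_lift_vertices[OF finite_X] lift_dist_def)
  then show "prob_dist X' (lift_dist r)"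
    using assms(1) by (auto simp: prob_dist_def lift_dist_def lift_vertices_def)
  show "supp X' (lift_dist r) \<subseteq> {1} \<times> supp X \<sigma>"
    using assms(2) by (auto simp: supp_def lift_dist_def lift_vertices_def)
qed

lemma prob_dist_lift_cases:
  assumes s: "prob_dist X' s" "supp X' s \<subseteq> {1} \<times> supp X \<sigma>"
  obtains r where "prob_dist X r" "supp X r \<subseteq> supp X \<sigma>" "s = lift_dist r"
proof
  have s0: "s (i, u) = 0" if "i \<noteq> 1" for i u
  proof (cases "(i, u) \<in> X'")
    case True
    have "(i, u) \<notin> supp X' s" using s(2) that by blast
    then show ?thesis using True that by (simp add: supp_def)
  next
    case False
    then show ?thesis using s(1) unfolding prob_dist_def by blast
  qed
  show "s = lift_dist (\<lambda>u. s (1, u))"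
    using s0 by (auto simp: lift_dist_def)
  have "sum (\<lambda>u. s (1, u)) X = sum s X'"
    using s0 by (simp add: sum_lift_vertices[OF finite_X])
  then show "prob_dist X (\<lambda>u. s (1, u))"
    using s(1) by (simp add: prob_dist_def)
  show "supp X (\<lambda>u. s (1, u)) \<subseteq> supp X \<sigma>"
  proof
    fix u assume "u \<in> supp X (\<lambda>u. s (1, u))"
    then have "(1, u) \<in> supp X' s" by (simp add: supp_def)
    then show "u \<in> supp X \<sigma>" using s(2) by blast
  qed
qed

text \<open>Every admissible source distribution of the lifted graph is a lift, so its resistance is
  at least \<open>C / W\<close> by \<open>sum_sq_divide_ge_1\<close>.\<close>

lemma eff_res_set_lift_bounds:
  assumes r: "prob_dist X r" "supp X r \<subseteq> supp X \<sigma>"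
  defines "R' \<equiv> eff_res_set X' w' ({1} \<times> supp X \<sigma>) ({0} \<times> M)"
  shows "C / W \<le> R'" and "R' \<le> eff_res X w r M + C / W * (\<Sum>u\<in>X. (r u)\<^sup>2 / \<sigma> u)"
proof -
  define F where "F = {eff_res X' w' s ({0} \<times> M) | s. prob_dist X' s \<and> supp X' s \<subseteq> {1} \<times> supp X \<sigma>}"
  have lower: "C / W \<le> f" if "f \<in> F" for f
  proof -
    obtain r' where r': "prob_dist X r'" "supp X r' \<subseteq> supp X \<sigma>"
      and f: "f = eff_res X' w' (lift_dist r') ({0} \<times> M)"
      using \<open>f \<in> F\<close> prob_dist_lift_cases unfolding F_def by blast
    have "C / W * 1 \<le> C / W * (\<Sum>u\<in>X. (r' u)\<^sup>2 / \<sigma> u)"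
      using sum_sq_divide_ge_1[OF r'(1) sigma r'(2)] W_pos C_pos by (intro mult_left_mono) auto
    then show ?thesis
      using f eff_res_lift[OF r'] eff_res_source_nonneg[OF r'] by simp
  qed
  have lifted: "eff_res X' w' (lift_dist r) ({0} \<times> M) \<in> F"
    unfolding F_def using lift_dist_prob_dist[OF r] by blast
  have "R' = Inf F" unfolding R'_def eff_res_set_def F_def ..
  then show "C / W \<le> R'"
    using lifted lower by (auto intro: cInf_greatest)
  have "Inf F \<le> eff_res X' w' (lift_dist r) ({0} \<times> M)"
    using lifted lower by (intro cInf_lower) (auto simp: bdd_below_def)
  then show "R' \<le> eff_res X w r M + C / W * (\<Sum>u\<in>X. (r u)\<^sup>2 / \<sigma> u)"
    using \<open>R' = Inf F\<close> eff_res_lift[OF r] by simp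
qed

lemma commute_time_set_stat_meas_lift_bounds:
  assumes r: "prob_dist X r" "supp X r \<subseteq> supp X \<sigma>"
  defines "t \<equiv> commute_time_set X' w' ({1} \<times> supp X \<sigma>) ({0} \<times> M) * stat_meas X' w' ({1} \<times> supp X \<sigma>)"
  shows "1 \<le> t" and "t \<le> commute_time X w r M / C + (\<Sum>u\<in>X. (r u)\<^sup>2 / \<sigma> u)"
proof -
  have t: "t = W / C * eff_res_set X' w' ({1} \<times> supp X \<sigma>) ({0} \<times> M)"
    unfolding t_def commute_time_set_def total_weight_lift stat_meas_lift_source
    using C_pos by simp
  have "W / C * (C / W) \<le> t"
    unfolding t using eff_res_set_lift_bounds(1)[OF r] W_pos C_pos by (intro mult_left_mono) auto
  then show "1 \<le> t" using W_pos C_pos by simp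
  have "t \<le> W / C * (eff_res X w r M + C / W * (\<Sum>u\<in>X. (r u)\<^sup>2 / \<sigma> u))"
    unfolding t using eff_res_set_lift_bounds(2)[OF r] W_pos C_pos by (intro mult_left_mono) auto
  also have "\<dots> = commute_time X w r M / C + (\<Sum>u\<in>X. (r u)\<^sup>2 / \<sigma> u)"
    using W_pos C_pos by (simp add: commute_time_def field_simps)
  finally show "t \<le> commute_time X w r M / C + (\<Sum>u\<in>X. (r u)\<^sup>2 / \<sigma> u)" .
qed

lemma half_min_le_lift_bound:
  assumes \<rho>: "prob_dist X \<rho>" "supp X \<rho> \<subseteq> supp X \<sigma>" and Q: "(\<Sum>u\<in>X. (\<rho> u)\<^sup>2 / \<sigma> u) = 1 / p"
  shows "1 / 2 * min p (C / commute_time X w \<rho> M)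
    \<le> 1 / (commute_time_set X' w' ({1} \<times> supp X \<sigma>) ({0} \<times> M) * stat_meas X' w' ({1} \<times> supp X \<sigma>))"
proof -
  have "commute_time X w \<rho> M / C \<ge> 0"
    using eff_res_source_nonneg[OF \<rho>] W_pos C_pos by (simp add: commute_time_def)
  moreover have "p > 0"
    using sum_sq_divide_ge_1[OF \<rho>(1) sigma \<rho>(2)] Q by (simp add: le_divide_eq split: if_splits)
  ultimately have "1 / 2 * min p (1 / (commute_time X w \<rho> M / C))
      \<le> 1 / (commute_time_set X' w' ({1} \<times> supp X \<sigma>) ({0} \<times> M) * stat_meas X' w' ({1} \<times> supp X \<sigma>))"
    using commute_time_set_stat_meas_lift_bounds[OF \<rho>, unfolded Q] by (rule half_min_le_inverse)
  then show ?thesis by simp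
qed

end

theorem mainTheorem7:
  fixes X :: "'a set" and w :: "'a \<Rightarrow> 'a \<Rightarrow> real" and M S :: "'a set"
    and \<sigma> :: "'a \<Rightarrow> real" and C :: real
  assumes wg: "weighted_graph X w"
    and conn: "wg_connected X w"
    and M: "M \<subseteq> X" "M \<noteq> {}"
    and sigma: "prob_dist X \<sigma>"
    and S: "S = supp X \<sigma>" "S \<subseteq> X - M"
    and C: "C > 0"
  shows "stat_meas (lift_vertices X) (lift_weight X w \<sigma> C) ({1} \<times> S) = 1 / (C + 2)
    \<and> (\<forall>\<rho> p. prob_dist X \<rho> \<and> supp X \<rho> \<subseteq> S \<and> (\<Sum>u\<in>S. (\<rho> u)\<^sup>2 / \<sigma> u) = 1 / p \<longrightarrow>
         commute_time (lift_vertices X) (lift_weight X w \<sigma> C) (lift_dist \<rho>) ({0} \<times> M)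
           = (commute_time X w \<rho> M / C + 1 / p) * (C + 2)
       \<and> 1 / (commute_time_set (lift_vertices X) (lift_weight X w \<sigma> C) ({1} \<times> S) ({0} \<times> M)
              * stat_meas (lift_vertices X) (lift_weight X w \<sigma> C) ({1} \<times> S))
           \<ge> 1 / 2 * min p (C / commute_time X w \<rho> M))"
proof -
  interpret lifted_graph X w M \<sigma> C
    using assms by unfold_locales auto
  have lifted: "commute_time X' w' (lift_dist \<rho>) ({0} \<times> M) = (commute_time X w \<rho> M / C + 1 / p) * (C + 2)
      \<and> 1 / (commute_time_set X' w' ({1} \<times> supp X \<sigma>) ({0} \<times> M) * stat_meas X' w' ({1} \<times> supp X \<sigma>))
          \<ge> 1 / 2 * min p (C / commute_time X w \<rho> M)"
    if "prob_dist X \<rho>" "supp X \<rho> \<subseteq> supp X \<sigma>" "(\<Sum>u\<in>X. (\<rho> u)\<^sup>2 / \<sigma> u) = 1 / p" for \<rho> p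
    using commute_time_lift[OF that(1,2)] half_min_le_lift_bound[OF that] that(3) by simp
  show ?thesis
    using stat_meas_lift_source lifted S(1) sum_divide_supp[OF finite_X] by auto
qed

end
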